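(* Let $\mathcal A,\mathcal B>0$, $\alpha,\beta\in(0,1)$, $h,\tau>0$, $N\ge1$, and assume $$\frac{\tau^{\alpha}(-\alpha^2+4\alpha-2)\mathcal A+\tau^{\beta}(-\beta^2+4\beta-2)\mathcal B}{h^2}\le\frac{279}{952}.$$ Fix a real $\theta$, let $s=\sin^2(\theta h/2)$, and let $\widetilde\xi_0\in\mathbb C$ and $\widetilde\xi_1,\dots,\widetilde\xi_N$ be defined by $$\widetilde{\mathcal Q}\,\widetilde\xi_{k+1}=\widetilde{\mathcal P}\,\widetilde\xi_k-4s\Big[1+\tfrac13 s+\tfrac8{45}s^2\Big]\sum_{\ell=2}^{k+1}g_\ell^{(\alpha,\beta)}\widetilde\xi_{k+1-\ell},\qquad k=0,\dots,N-1,$$ where $\widetilde{\mathcal Q}=[1-\frac{4}{35}s^3]+4g_0^{(\alpha,\beta)}s[1+\frac13 s+\frac8{45}s^2]$ and $\widetilde{\mathcal P}=[1-\frac{4}{35}s^3]-4g_1^{(\alpha,\beta)}s[1+\frac13 s+\frac8{45}s^2]$. Then $|\widetilde\xi_{k+1}|\le|\widetilde\xi_0|$ for $k=0,1,\dots,N-1$.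
   Context: $\varpi_\ell^{(\sigma)}=(-1)^\ell\binom{\sigma}{\ell}$, $g_0^{(\sigma)}=\frac{1+\sigma}{2}\varpi_0^{(\sigma)}$, $g_\ell^{(\sigma)}=\frac{1+\sigma}{2}\varpi_\ell^{(\sigma)}+\frac{1-\sigma}{2}\varpi_{\ell-1}^{(\sigma)}$ ($\ell\ge1$); $\mu_\alpha=\tau^\alpha\mathcal A/h^2$, $\mu_\beta=\tau^\beta\mathcal B/h^2$, $g_\ell^{(\alpha,\beta)}=\mu_\alpha g_\ell^{(1-\alpha)}+\mu_\beta g_\ell^{(1-\beta)}$. The sum is empty for $k=0$. *)

theory Defs
  imports Complex_Main
begin

definition varpi :: "real \<Rightarrow> nat \<Rightarrow> real" where
  "varpi \<sigma> l = (-1) ^ l * (\<sigma> gchoose l)"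

definition gcoef :: "real \<Rightarrow> nat \<Rightarrow> real" where
  "gcoef \<sigma> l = (if l = 0 then (1 + \<sigma>) / 2 * varpi \<sigma> 0
     else (1 + \<sigma>) / 2 * varpi \<sigma> l + (1 - \<sigma>) / 2 * varpi \<sigma> (l - 1))"

definition gab :: "real \<Rightarrow> real \<Rightarrow> real \<Rightarrow> real \<Rightarrow> real \<Rightarrow> real \<Rightarrow> nat \<Rightarrow> real" where
  "gab A B \<alpha> \<beta> h \<tau> l =
     (\<tau> powr \<alpha> * A / h^2) * gcoef (1 - \<alpha>) l + (\<tau> powr \<beta> * B / h^2) * gcoef (1 - \<beta>) l"

end

theory Submission imports Defs begin

text \<open>The recursion is a convolution whose kernel \<open>g l\<close> is nonpositive for \<open>l \<ge> 2\<close> and has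
  nonnegative partial sums, both inherited from the sign pattern of \<open>(-1)^l (\<sigma> gchoose l)\<close>
  for \<open>0 \<le> \<sigma> < 1\<close>. Hence, by strong induction,
  \<open>Q |\<xi>(k+1)| \<le> (|P| - c (g 2 + \<dots> + g (k+1))) |\<xi> 0| \<le> (|P| + c (g 0 + g 1)) |\<xi> 0|\<close>,
  and \<open>|P| + c (g 0 + g 1) = Q\<close> as soon as \<open>P \<ge> 0\<close>. The step-size condition bounds \<open>g 1\<close>
  by \<open>279/1904\<close>, exactly the constant for which \<open>P \<ge> 0\<close> on all of \<open>s \<in> [0,1]\<close>, with equality
  at \<open>s = 1\<close>.\<close>

lemma gbinomial_pos:
  fixes x :: real
  assumes "real k - 1 < x"
  shows "0 < x gchoose k"
  using assms by (simp add: gbinomial_pochhammer' pochhammer_pos)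

lemma sum_varpi_atMost: "(\<Sum>l\<le>n. varpi \<sigma> l) = (real n - \<sigma>) gchoose n"
proof -
  have "(\<Sum>l\<le>n. varpi \<sigma> l) = (-1) ^ n * (\<sigma> - 1 gchoose n)"
    using gbinomial_sum_lower_neg[of \<sigma> n] by (simp add: varpi_def mult.commute)
  also have "\<dots> = (real n - \<sigma>) gchoose n"
    by (simp add: gbinomial_negated_upper[of "\<sigma> - 1"] power_mult_distrib[symmetric])
  finally show ?thesis .
qed

lemma sum_varpi_atMost_pos: "\<sigma> < 1 \<Longrightarrow> 0 < (\<Sum>l\<le>n. varpi \<sigma> l)"
  unfolding sum_varpi_atMost by (rule gbinomial_pos) simp

lemma varpi_Suc: "varpi \<sigma> (Suc n) = - (\<sigma> / real (Suc n)) * (\<Sum>l\<le>n. varpi \<sigma> l)"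
proof -
  have "varpi \<sigma> (Suc n) = (-1) ^ Suc n * (\<sigma> / real (Suc n) * (\<sigma> - 1 gchoose n))"
    by (simp add: varpi_def gbinomial_absorption' del: of_nat_Suc)
  also have "\<dots> = - (\<sigma> / real (Suc n)) * ((-1) ^ n * (\<sigma> - 1 gchoose n))"
    by simp
  also have "(-1) ^ n * (\<sigma> - 1 gchoose n) = (\<Sum>l\<le>n. varpi \<sigma> l)"
    using gbinomial_sum_lower_neg[of \<sigma> n] by (simp add: varpi_def mult.commute)
  finally show ?thesis .
qed

lemma varpi_nonpos: "0 \<le> \<sigma> \<Longrightarrow> \<sigma> < 1 \<Longrightarrow> 0 < l \<Longrightarrow> varpi \<sigma> l \<le> 0"
  using varpi_Suc[of \<sigma> "l - 1"] sum_varpi_atMost_pos[of \<sigma> "l - 1"]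
  by (simp add: mult_nonneg_nonneg)

lemma gcoef_0: "gcoef \<sigma> 0 = (1 + \<sigma>) / 2"
  by (simp add: gcoef_def varpi_def)

lemma gcoef_1: "gcoef \<sigma> 1 = (1 - 2 * \<sigma> - \<sigma>^2) / 2"
  by (simp add: gcoef_def varpi_def field_simps power2_eq_square)

lemma gcoef_nonpos: "0 \<le> \<sigma> \<Longrightarrow> \<sigma> < 1 \<Longrightarrow> 2 \<le> l \<Longrightarrow> gcoef \<sigma> l \<le> 0"
  unfolding gcoef_def using varpi_nonpos[of \<sigma> l] varpi_nonpos[of \<sigma> "l - 1"]
  by (simp add: add_nonpos_nonpos mult_nonneg_nonpos)

lemma sum_gcoef_atMost_Suc:
  "(\<Sum>l\<le>Suc m. gcoef \<sigma> l) =
     (1 + \<sigma>) / 2 * (\<Sum>l\<le>Suc m. varpi \<sigma> l) + (1 - \<sigma>) / 2 * (\<Sum>l\<le>m. varpi \<sigma> l)"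
  by (induction m) (simp_all add: gcoef_def algebra_simps)

lemma sum_gcoef_atMost_nonneg:
  assumes "-1 \<le> \<sigma>" "\<sigma> < 1"
  shows "0 \<le> (\<Sum>l\<le>n. gcoef \<sigma> l)"
proof (cases n)
  case (Suc m)
  have "0 \<le> (1 + \<sigma>) / 2 * (\<Sum>l\<le>Suc m. varpi \<sigma> l) + (1 - \<sigma>) / 2 * (\<Sum>l\<le>m. varpi \<sigma> l)"
    using assms sum_varpi_atMost_pos[of \<sigma> "Suc m"] sum_varpi_atMost_pos[of \<sigma> m]
    by (intro add_nonneg_nonneg mult_nonneg_nonneg) auto
  then show ?thesis by (simp only: Suc sum_gcoef_atMost_Suc)
qed (use assms in \<open>simp add: gcoef_0\<close>)

lemma gab_0_nonneg:
  assumes "0 \<le> A" "0 \<le> B" "\<alpha> \<le> 2" "\<beta> \<le> 2"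
  shows "0 \<le> gab A B \<alpha> \<beta> h \<tau> 0"
  using assms by (simp add: gab_def gcoef_0)

lemma gab_1:
  "gab A B \<alpha> \<beta> h \<tau> 1 =
     (\<tau> powr \<alpha> * (- (\<alpha>^2) + 4*\<alpha> - 2) * A + \<tau> powr \<beta> * (- (\<beta>^2) + 4*\<beta> - 2) * B) / h^2 / 2"
  unfolding gab_def gcoef_1 by (cases "h = 0") (simp_all add: field_simps power2_eq_square)

lemma gab_nonpos:
  assumes "0 \<le> A" "0 \<le> B" "0 < \<alpha>" "\<alpha> \<le> 1" "0 < \<beta>" "\<beta> \<le> 1" "2 \<le> l"
  shows "gab A B \<alpha> \<beta> h \<tau> l \<le> 0"
  using assms gcoef_nonpos[of "1 - \<alpha>" l] gcoef_nonpos[of "1 - \<beta>" l]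
  unfolding gab_def by (intro add_nonpos_nonpos mult_nonneg_nonpos) simp_all

lemma sum_gab_atMost_nonneg:
  assumes "0 \<le> A" "0 \<le> B" "0 < \<alpha>" "\<alpha> \<le> 2" "0 < \<beta>" "\<beta> \<le> 2"
  shows "0 \<le> (\<Sum>l\<le>n. gab A B \<alpha> \<beta> h \<tau> l)"
  using assms sum_gcoef_atMost_nonneg[of "1 - \<alpha>" n] sum_gcoef_atMost_nonneg[of "1 - \<beta>" n]
  unfolding gab_def sum.distrib sum_distrib_left[symmetric] by simp

lemma norm_sum_nonpos_weights_le:
  fixes y :: "nat \<Rightarrow> 'a::real_normed_div_algebra"
  assumes "\<And>l. l \<in> I \<Longrightarrow> g l \<le> 0" "\<And>l. l \<in> I \<Longrightarrow> norm (y l) \<le> M"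
  shows "norm (\<Sum>l\<in>I. of_real (g l) * y l) \<le> - (\<Sum>l\<in>I. g l) * M"
proof -
  have "norm (\<Sum>l\<in>I. of_real (g l) * y l) \<le> (\<Sum>l\<in>I. \<bar>g l\<bar> * norm (y l))"
    using norm_sum[of "\<lambda>l. of_real (g l) * y l" I] by (simp add: norm_mult)
  also have "\<dots> \<le> (\<Sum>l\<in>I. - g l * M)"
    using assms by (intro sum_mono) (simp add: abs_of_nonpos mult_left_mono_neg)
  finally show ?thesis by (simp add: sum_negf sum_distrib_right)
qed

lemma norm_le_initial_of_convolution_recursion:
  fixes x :: "nat \<Rightarrow> 'a::real_normed_div_algebra" and g :: "nat \<Rightarrow> real"
  assumes "0 < Q" "0 \<le> c" "\<bar>P\<bar> + c * (g 0 + g 1) \<le> Q"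
    and g_nonpos: "\<And>l. 2 \<le> l \<Longrightarrow> g l \<le> 0"
    and g_sum: "\<And>n. 0 \<le> (\<Sum>l\<le>n. g l)"
    and rec: "\<And>k. k < N \<Longrightarrow> of_real Q * x (k + 1) =
      of_real P * x k - of_real c * (\<Sum>l = 2..k + 1. of_real (g l) * x (k + 1 - l))"
  shows "j \<le> N \<Longrightarrow> norm (x j) \<le> norm (x 0)"
proof (induction j rule: less_induct)
  case (less j)
  show ?case
  proof (cases j)
    case (Suc k)
    let ?M = "norm (x 0)"
    have IH: "\<And>i. i \<le> k \<Longrightarrow> norm (x i) \<le> ?M"
      using less Suc by simp
    have tail: "- (\<Sum>l = 2..k + 1. g l) \<le> g 0 + g 1"
    proof -
      have "{..k + 1} = {0, 1} \<union> {2..k + 1}" by auto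
      then show ?thesis using g_sum[of "k + 1"] by (simp add: sum.union_disjoint)
    qed
    let ?S = "\<Sum>l = 2..k + 1. of_real (g l) * x (k + 1 - l)"
    have "Q * norm (x (k + 1)) = norm (of_real Q * x (k + 1))"
      using \<open>0 < Q\<close> by (simp add: norm_mult)
    also have "\<dots> \<le> norm (of_real P * x k) + norm (of_real c * ?S)"
      using less.prems Suc by (simp only: rec norm_triangle_ineq4)
    also have "\<dots> = \<bar>P\<bar> * norm (x k) + c * norm ?S"
      using \<open>0 \<le> c\<close> by (simp add: norm_mult)
    also have "\<dots> \<le> \<bar>P\<bar> * ?M + c * (- (\<Sum>l = 2..k + 1. g l) * ?M)"
      using IH g_nonpos \<open>0 \<le> c\<close>
      by (intro add_mono mult_left_mono norm_sum_nonpos_weights_le) auto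
    also have "\<dots> \<le> \<bar>P\<bar> * ?M + c * ((g 0 + g 1) * ?M)"
      using tail \<open>0 \<le> c\<close> by (intro add_left_mono mult_left_mono mult_right_mono) auto
    also have "\<dots> \<le> Q * ?M"
      using mult_right_mono[OF assms(3) norm_ge_zero[of "x 0"]] by (simp only: distrib_right mult.assoc)
    finally show ?thesis using \<open>0 < Q\<close> Suc by simp
  qed simp
qed

lemma scheme_factor_le:
  fixes s :: real
  assumes "0 \<le> s" "s \<le> 1"
  shows "279 / 1904 * (4 * s * (1 + s / 3 + 8 / 45 * s^2)) \<le> 1 - 4 / 35 * s^3"
proof -
  have "s^2 \<le> 1" "s^3 \<le> 1" using assms by (simp_all add: power_le_one)
  then show ?thesis using assms by (simp add: algebra_simps power2_eq_square power3_eq_cube)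
qed

theorem lemma10:
  fixes A B \<alpha> \<beta> h \<tau> \<theta> :: real and N :: nat and \<xi> :: "nat \<Rightarrow> complex"
  assumes "A > 0" "B > 0" "0 < \<alpha>" "\<alpha> < 1" "0 < \<beta>" "\<beta> < 1" "h > 0" "\<tau> > 0" "N \<ge> 1"
    and "(\<tau> powr \<alpha> * (- (\<alpha>^2) + 4*\<alpha> - 2) * A + \<tau> powr \<beta> * (- (\<beta>^2) + 4*\<beta> - 2) * B) / h^2
           \<le> 279 / 952"
    and rec: "\<And>k. k < N \<Longrightarrow>
      let s = (sin (\<theta> * h / 2))^2;
          F = 1 + s / 3 + 8 / 45 * s^2;
          Q = (1 - 4 / 35 * s^3) + 4 * gab A B \<alpha> \<beta> h \<tau> 0 * s * F;
          P = (1 - 4 / 35 * s^3) - 4 * gab A B \<alpha> \<beta> h \<tau> 1 * s * F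
      in complex_of_real Q * \<xi> (k + 1) =
           complex_of_real P * \<xi> k
           - complex_of_real (4 * s * F) *
               (\<Sum>l = 2..k + 1. complex_of_real (gab A B \<alpha> \<beta> h \<tau> l) * \<xi> (k + 1 - l))"
  shows "\<forall>k < N. cmod (\<xi> (k + 1)) \<le> cmod (\<xi> 0)"
proof -
  define g where "g = gab A B \<alpha> \<beta> h \<tau>"
  define s where "s = (sin (\<theta> * h / 2))^2"
  define c where "c = 4 * s * (1 + s / 3 + 8 / 45 * s^2)"
  define E where "E = 1 - 4 / 35 * s^3"
  have s: "0 \<le> s" "s \<le> 1" unfolding s_def by (simp_all add: abs_square_le_1)
  then have "0 \<le> c" "s^3 \<le> 1" unfolding c_def by (simp_all add: power_le_one)
  then have "0 < E" unfolding E_def by simp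
  have "g 0 \<ge> 0" unfolding g_def using assms by (intro gab_0_nonneg) auto
  have "g 1 \<le> 279 / 1904"
    using divide_right_mono[OF assms(10), of 2] unfolding g_def gab_1 by simp
  then have "g 1 * c \<le> 279 / 1904 * c"
    using \<open>0 \<le> c\<close> by (rule mult_right_mono)
  also have "\<dots> \<le> E" using scheme_factor_le[OF s] unfolding c_def E_def .
  finally have "0 \<le> E - g 1 * c" by simp
  show ?thesis
  proof (intro allI impI norm_le_initial_of_convolution_recursion[of "E + g 0 * c" c "E - g 1 * c" g N \<xi>])
    show "0 < E + g 0 * c" using \<open>0 < E\<close> \<open>0 \<le> g 0\<close> \<open>0 \<le> c\<close> by (simp add: add_pos_nonneg)
    show "\<bar>E - g 1 * c\<bar> + c * (g 0 + g 1) \<le> E + g 0 * c"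
      using \<open>0 \<le> E - g 1 * c\<close> by (simp add: algebra_simps)
    show "\<And>l. 2 \<le> l \<Longrightarrow> g l \<le> 0" unfolding g_def using assms by (intro gab_nonpos) auto
    show "\<And>n. 0 \<le> (\<Sum>l\<le>n. g l)" unfolding g_def using assms by (intro sum_gab_atMost_nonneg) auto
    show "\<And>k. k < N \<Longrightarrow> complex_of_real (E + g 0 * c) * \<xi> (k + 1) = complex_of_real (E - g 1 * c) * \<xi> k
      - complex_of_real c * (\<Sum>l = 2..k + 1. complex_of_real (g l) * \<xi> (k + 1 - l))"
      using rec unfolding Let_def g_def s_def c_def E_def by (simp add: mult_ac)
  qed (use \<open>0 \<le> c\<close> in auto)
qed

end
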